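(* Let $f:\mathbb{R}^{n\times n}\to\mathbb{R}$ be differentiable with $\|\nabla f(X)-\nabla f(Y)\|_{\mathsf F}\le L\|X-Y\|_{\mathsf F}$ for all $X,Y\in\mathcal{D}_{[0,1]^n}$. Let $0<p<1$, $\epsilon\ge0$, $\sigma>0$, and let $\bar X\in\mathcal{D}_n$ be a KKT point of \[ \min_{X\in\mathcal{D}_n}\ f(X)+\sigma\sum_{i,j=1}^n (X_{ij}+\epsilon)^p, \] i.e. there exist $S\in\mathbb{R}^{n\times n}$ and $\lambda,\mu\in\mathbb{R}^n$ such that for all $i,j\in\{1,\dots,n\}$: $\bar X_{ij}S_{ij}=0$, $S_{ij}\ge0$, and $(W_{ij}-\lambda_i-\mu_j)(\bar X_{ij}+\epsilon)+\sigma p(\bar X_{ij}+\epsilon)^p=\epsilon S_{ij}$, where $W=\nabla f(\bar X)$. Define \[ \bar c=\Big(\|\bar X\|_0^{1-p}(n+\|\bar X\|_0\epsilon)^p-(n-1)(1+\epsilon)^{p-1}+\sqrt{2n}\,\frac{L\sqrt n+\|\nabla f(\mathbf 0)\|_{\mathsf F}}{\sigma p}\Big)^{\frac{1}{p-1}} . \] Then every $(i,j)$ with $\bar X_{ij}>0$ satisfies $\bar X_{ij}\ge\max(\bar c-\epsilon,0)$.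
   Context: $\mathcal{D}_n=\{X\in\mathbb{R}^{n\times n}: X\mathbf{e}=X^{\mathsf T}\mathbf{e}=\mathbf{e},\ X\ge0\}$ ($\mathbf{e}$ the all-ones vector), $\mathcal{D}_{[0,1]^n}=\{X\in\mathbb{R}^{n\times n}:0\le X_{ij}\le1\}$, $\|X\|_0$ is the number of nonzero entries of $X$, $\mathbf 0$ is the zero matrix, $\|\cdot\|_{\mathsf F}$ the Frobenius norm. *)

theory Defs
  imports "HOL-Analysis.Analysis"
begin

text \<open>n x n real matrices are represented as real^'n^'n; the Euclidean norm on this
type is the Frobenius norm and the inner product is the Frobenius inner product.\<close>

definition doubly_stochastic :: "real^'n^'n \<Rightarrow> bool" where
  "doubly_stochastic X \<longleftrightarrow>
     (\<forall>i. (\<Sum>j\<in>UNIV. X$i$j) = 1) \<and> (\<forall>j. (\<Sum>i\<in>UNIV. X$i$j) = 1) \<and> (\<forall>i j. X$i$j \<ge> 0)"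

definition unit_box_mat :: "(real^'n^'n) set" where
  "unit_box_mat = {X. \<forall>i j. 0 \<le> X$i$j \<and> X$i$j \<le> 1}"

definition l0norm :: "real^'n^'n \<Rightarrow> nat" where
  "l0norm X = card {(i,j). X$i$j \<noteq> 0}"

end

theory Submission
  imports Defs
begin

text \<open>Put D k l = \<lambda> k + \<mu> l - W k l with W the gradient at X. On the support of X the
KKT conditions give D k l = \<sigma> p (X k l + \<epsilon>) powr (p - 1). By Hall's theorem the support of
the doubly stochastic X contains a permutation \<pi> through the entry (i, j). Summing D along \<pi>
and weighting D by X produce the same multiplier terms, so the sum of D along \<pi> equals the
X-weighted sum of D plus \<langle>W, X - P\<rangle>, P the permutation matrix of \<pi>. As X \<le> 1, the sum
along \<pi> is at least \<sigma> p ((X i j + \<epsilon>) powr (p - 1) + (n - 1) (1 + \<epsilon>) powr (p - 1)); by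
concavity of t powr p the weighted sum is at most \<sigma> p m powr (1 - p) (n + m \<epsilon>) powr p, where
m is the number of nonzero entries of X; and by Cauchy-Schwarz the inner product is at most
\<surd>(2n) (L \<surd>n + \<parallel>\<nabla>f 0\<parallel>). Inverting the decreasing map t \<mapsto> t powr (p - 1) yields the bound.\<close>

lemma hall_condition_remove_element:
  fixes S :: "'a \<Rightarrow> 'b set"
  assumes fin: "finite I" "\<And>i. i \<in> I \<Longrightarrow> finite (S i)"
    and surplus: "\<And>J. J \<subseteq> I \<Longrightarrow> J \<noteq> {} \<Longrightarrow> J \<noteq> I \<Longrightarrow> card J < card (\<Union>(S ` J))"
    and J: "J \<subseteq> I - {i0}" "i0 \<in> I"
  shows "card J \<le> card (\<Union>k\<in>J. S k - {x})"
proof (cases "J = {}")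
  case False
  have "J \<subseteq> I" "J \<noteq> I" using J by auto
  then have "card J < card (\<Union>(S ` J))" using surplus False by blast
  moreover have fin_J: "finite (\<Union>k\<in>J. S k - {x})"
    using fin \<open>J \<subseteq> I\<close> finite_subset by blast
  have "card (\<Union>(S ` J)) \<le> card (insert x (\<Union>k\<in>J. S k - {x}))"
    using fin_J by (intro card_mono) auto
  also have "\<dots> \<le> card (\<Union>k\<in>J. S k - {x}) + 1"
    using card_insert_if[OF fin_J, of x] by simp
  ultimately show ?thesis by linarith
qed simp

lemma hall_condition_remove_tight_subfamily:
  fixes S :: "'a \<Rightarrow> 'b set"
  assumes fin: "finite I"
    and hall: "\<And>K. K \<subseteq> I \<Longrightarrow> card K \<le> card (\<Union>(S ` K))"
    and J: "J \<subseteq> I" "card (\<Union>(S ` J)) \<le> card J"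
    and K: "K \<subseteq> I - J"
  shows "card K \<le> card (\<Union>k\<in>K. S k - \<Union>(S ` J))"
proof -
  have "card K + card J = card (K \<union> J)"
    using K J fin by (intro card_Un_disjoint[symmetric]) (auto dest: finite_subset)
  also have "\<dots> \<le> card (\<Union>(S ` (K \<union> J)))" using K J by (intro hall) auto
  also have "\<Union>(S ` (K \<union> J)) = (\<Union>k\<in>K. S k - \<Union>(S ` J)) \<union> \<Union>(S ` J)" by auto
  also have "card \<dots> \<le> card (\<Union>k\<in>K. S k - \<Union>(S ` J)) + card (\<Union>(S ` J))" by (rule card_Un_le)
  finally show ?thesis using J(2) by linarith
qed

theorem hall_marriage:
  fixes S :: "'a \<Rightarrow> 'b set"
  assumes "finite I" "\<And>i. i \<in> I \<Longrightarrow> finite (S i)"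
    and "\<And>J. J \<subseteq> I \<Longrightarrow> card J \<le> card (\<Union>(S ` J))"
  shows "\<exists>f. inj_on f I \<and> (\<forall>i\<in>I. f i \<in> S i)"
  using assms
proof (induct I arbitrary: S rule: finite_psubset_induct)
  case (psubset I)
  note IH = psubset.hyps(2) and fin = psubset.hyps(1)
    and finS = psubset.prems(1) and hall = psubset.prems(2)
  consider "I = {}"
    | "I \<noteq> {}" "\<And>J. J \<subseteq> I \<Longrightarrow> J \<noteq> {} \<Longrightarrow> J \<noteq> I \<Longrightarrow> card J < card (\<Union>(S ` J))"
    | J where "J \<subseteq> I" "J \<noteq> {}" "J \<noteq> I" "card (\<Union>(S ` J)) \<le> card J"
    by (meson not_le)
  then show ?case
  proof cases
    case 1
    then show ?thesis by simp
  next
    case 2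
    then obtain i0 where i0: "i0 \<in> I" by auto
    have "card {i0} \<le> card (S i0)" using hall[of "{i0}"] i0 by simp
    then obtain x where x: "x \<in> S i0" by fastforce
    have "I - {i0} \<subset> I" using i0 by auto
    then obtain f where f: "inj_on f (I - {i0})" "\<forall>k\<in>I - {i0}. f k \<in> S k - {x}"
      using IH[of "I - {i0}" "\<lambda>k. S k - {x}"] finS
        hall_condition_remove_element[OF fin finS 2(2) _ i0, of _ x] by auto
    have "inj_on (f(i0 := x)) (insert i0 (I - {i0}))"
      using f by (auto simp: inj_on_def)
    then have "inj_on (f(i0 := x)) I" using i0 by (simp add: insert_absorb)
    moreover have "\<forall>k\<in>I. (f(i0 := x)) k \<in> S k" using f x by auto
    ultimately show ?thesis by blast
  next
    case 3
    define U where "U = \<Union>(S ` J)"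
    have "J \<subset> I" "I - J \<subset> I" using 3 by auto
    obtain f1 where f1: "inj_on f1 J" "\<forall>k\<in>J. f1 k \<in> S k"
      using IH[OF \<open>J \<subset> I\<close>, of S] finS hall 3(1) by (meson subset_trans subsetD)
    obtain f2 where f2: "inj_on f2 (I - J)" "\<forall>k\<in>I - J. f2 k \<in> S k - U"
      using IH[OF \<open>I - J \<subset> I\<close>, of "\<lambda>k. S k - U"] finS
        hall_condition_remove_tight_subfamily[OF fin hall 3(1,4)]
      unfolding U_def by blast
    define f where "f k = (if k \<in> J then f1 k else f2 k)" for k
    have "f ` J \<subseteq> U" "f ` (I - J) \<inter> U = {}"
      using f1 f2 unfolding f_def U_def by auto
    then have "inj_on f (J \<union> (I - J))"
      using f1 f2 unfolding inj_on_Un f_def by (auto simp: inj_on_def)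
    moreover have "J \<union> (I - J) = I" using 3 by auto
    moreover have "\<forall>k\<in>I. f k \<in> S k" using f1 f2 unfolding f_def by auto
    ultimately show ?thesis by auto
  qed
qed

lemma sum_powr_le_card_powr_sum:
  fixes y :: "'a \<Rightarrow> real"
  assumes T: "finite T" "T \<noteq> {}" and y: "\<And>z. z \<in> T \<Longrightarrow> y z > 0" and p: "0 < p" "p < 1"
  shows "(\<Sum>z\<in>T. y z powr p) \<le> real (card T) powr (1 - p) * (\<Sum>z\<in>T. y z) powr p"
proof -
  define m where "m = real (card T)"
  define s where "s = (\<Sum>z\<in>T. y z)"
  define a where "a = s / m"
  have m: "m > 0" using T m_def by (simp add: card_gt_0_iff)
  have s: "s > 0" unfolding s_def using T y by (intro sum_pos) auto
  have a: "a > 0" using m s a_def by simp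
  have "(\<Sum>z\<in>T. y z powr p) * a powr (1 - p) = (\<Sum>z\<in>T. y z powr p * a powr (1 - p))"
    by (simp add: sum_distrib_right)
  also have "\<dots> \<le> (\<Sum>z\<in>T. p * y z + (1 - p) * a)"
    using Youngs_inequality_0 p a y by (intro sum_mono) (simp add: less_imp_le)
  also have "\<dots> = p * s + (1 - p) * a * m"
    by (simp add: sum.distrib sum_distrib_left[symmetric] s_def m_def)
  also have "\<dots> = s" using m unfolding a_def by (simp add: field_simps)
  finally have "(\<Sum>z\<in>T. y z powr p) \<le> s / a powr (1 - p)"
    using a by (simp add: pos_le_divide_eq)
  also have "\<dots> = m powr (1 - p) * s powr p"
    unfolding a_def using m s by (simp add: powr_divide powr_diff field_simps)
  finally show ?thesis unfolding m_def s_def .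
qed

lemma powr_recip_le_of_powr_le:
  fixes y b q :: real
  assumes "y > 0" "q < 0" "y powr q \<le> b"
  shows "b powr (1 / q) \<le> y"
proof -
  have "b powr (1 / q) \<le> (y powr q) powr (1 / q)"
    using assms by (intro powr_mono2') (auto simp: divide_neg_pos less_imp_le)
  also have "\<dots> = y" using assms by (simp add: powr_powr)
  finally show ?thesis .
qed

lemma kkt_multiplier_on_support:
  fixes x s w l m c p \<epsilon> :: real
  assumes "x > 0" "\<epsilon> \<ge> 0" "x * s = 0"
    and "(w - l - m) * (x + \<epsilon>) + c * (x + \<epsilon>) powr p = \<epsilon> * s"
  shows "l + m - w = c * (x + \<epsilon>) powr (p - 1)"
proof -
  have y: "x + \<epsilon> > 0" using assms by simp
  have "(l + m - w) * (x + \<epsilon>) = c * (x + \<epsilon>) powr p"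
    using assms by (simp add: algebra_simps)
  then show ?thesis using y by (simp add: powr_diff field_simps)
qed

lemma inner_mat_eq: "A \<bullet> B = (\<Sum>k\<in>UNIV. \<Sum>l\<in>UNIV. A$k$l * B$k$l)"
  for A B :: "real^'n^'n"
  by (simp add: inner_vec_def)

lemma norm_mat_eq: "norm A = sqrt (\<Sum>k\<in>UNIV. \<Sum>l\<in>UNIV. (A$k$l)\<^sup>2)"
  for A :: "real^'n^'n"
  by (simp add: norm_eq_sqrt_inner inner_mat_eq power2_eq_square)

lemma norm_diff_unit_box_le:
  fixes X Y :: "real^'n^'n"
  assumes "X \<in> unit_box_mat" "Y \<in> unit_box_mat"
  shows "norm (X - Y) \<le> sqrt ((\<Sum>k\<in>UNIV. \<Sum>l\<in>UNIV. X$k$l) + (\<Sum>k\<in>UNIV. \<Sum>l\<in>UNIV. Y$k$l))"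
proof -
  have "((X - Y)$k$l)\<^sup>2 \<le> X$k$l + Y$k$l" for k l
  proof -
    have "0 \<le> X$k$l" "X$k$l \<le> 1" "0 \<le> Y$k$l" "Y$k$l \<le> 1"
      using assms by (auto simp: unit_box_mat_def)
    then have "\<bar>X$k$l - Y$k$l\<bar> \<le> 1" "\<bar>X$k$l - Y$k$l\<bar> \<le> X$k$l + Y$k$l"
      by (simp_all add: abs_le_iff)
    then have "\<bar>X$k$l - Y$k$l\<bar> * \<bar>X$k$l - Y$k$l\<bar> \<le> X$k$l + Y$k$l"
      by (metis abs_ge_zero mult_left_le order_trans)
    then show ?thesis by (simp add: power2_eq_square)
  qed
  then show ?thesis
    unfolding norm_mat_eq by (simp add: sum.distrib[symmetric] sum_mono)
qed

lemma lipschitz_on_unit_box_nonneg: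
  fixes g :: "real^'n^'n \<Rightarrow> 'a::real_normed_vector"
  assumes "\<And>X Y. X \<in> unit_box_mat \<Longrightarrow> Y \<in> unit_box_mat \<Longrightarrow> norm (g X - g Y) \<le> L * norm (X - Y)"
  shows "L \<ge> 0"
proof -
  define One :: "real^'n^'n" where "One = (\<chi> k l. 1)"
  have box: "0 \<in> unit_box_mat" "One \<in> unit_box_mat" unfolding unit_box_mat_def One_def by auto
  have "One \<noteq> 0" unfolding One_def by (metis vec_lambda_beta zero_index zero_neq_one)
  then have "norm (0 - One) > 0" by simp
  moreover have "0 \<le> L * norm (0 - One)" using assms[OF box] norm_ge_zero order_trans by blast
  ultimately show ?thesis by (simp add: zero_le_mult_iff)
qed

definition perm_matrix :: "('n \<Rightarrow> 'n) \<Rightarrow> real^'n^'n" where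
  "perm_matrix \<pi> = (\<chi> k l. if l = \<pi> k then 1 else 0)"

lemma perm_matrix_in_unit_box: "perm_matrix \<pi> \<in> unit_box_mat"
  by (simp add: unit_box_mat_def perm_matrix_def)

lemma sum_perm_matrix: "(\<Sum>k\<in>UNIV. \<Sum>l\<in>UNIV. perm_matrix \<pi> $k$l) = real CARD('n)"
  for \<pi> :: "'n::finite \<Rightarrow> 'n"
  by (simp add: perm_matrix_def)

lemma inner_perm_matrix: "W \<bullet> perm_matrix \<pi> = (\<Sum>k\<in>UNIV. W$k$(\<pi> k))"
  by (simp add: inner_mat_eq perm_matrix_def if_distrib cong: if_cong)

lemma doubly_stochastic_le_1:
  assumes "doubly_stochastic X"
  shows "X$i$j \<le> 1"
proof -
  have "X$i$j \<le> (\<Sum>l\<in>UNIV. X$i$l)"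
    using assms by (intro member_le_sum) (auto simp: doubly_stochastic_def)
  then show ?thesis using assms by (simp add: doubly_stochastic_def)
qed

lemma doubly_stochastic_in_unit_box: "doubly_stochastic X \<Longrightarrow> X \<in> unit_box_mat"
  using doubly_stochastic_le_1 by (auto simp: unit_box_mat_def doubly_stochastic_def)

lemma sum_doubly_stochastic:
  fixes X :: "real^'n^'n"
  assumes "doubly_stochastic X"
  shows "(\<Sum>k\<in>UNIV. \<Sum>l\<in>UNIV. X$k$l) = real CARD('n)"
  using assms by (simp add: doubly_stochastic_def)

text \<open>The multipliers cancel because X and the permutation matrix have the same row and column
sums.\<close>

lemma sum_perm_matrix_diag_eq:
  fixes X W :: "real^'n^'n" and lam mu :: "real^'n"
  assumes "doubly_stochastic X" "bij \<pi>"
  shows "(\<Sum>k\<in>UNIV. lam$k + mu$(\<pi> k) - W$k$(\<pi> k))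
    = (\<Sum>k\<in>UNIV. \<Sum>l\<in>UNIV. X$k$l * (lam$k + mu$l - W$k$l)) + W \<bullet> (X - perm_matrix \<pi>)"
proof -
  have rows: "\<And>k. (\<Sum>l\<in>UNIV. X$k$l) = 1" and cols: "\<And>l. (\<Sum>k\<in>UNIV. X$k$l) = 1"
    using assms(1) by (auto simp: doubly_stochastic_def)
  have "(\<Sum>k\<in>UNIV. mu$(\<pi> k)) = (\<Sum>l\<in>UNIV. mu$l)"
    using sum.reindex_bij_betw[of \<pi> UNIV UNIV "\<lambda>l. mu$l"] assms(2) by simp
  then have "(\<Sum>k\<in>UNIV. lam$k + mu$(\<pi> k) - W$k$(\<pi> k))
      = (\<Sum>k\<in>UNIV. lam$k) + (\<Sum>l\<in>UNIV. mu$l) - W \<bullet> perm_matrix \<pi>"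
    by (simp add: inner_perm_matrix sum.distrib sum_subtractf)
  moreover have "(\<Sum>k\<in>UNIV. \<Sum>l\<in>UNIV. X$k$l * (lam$k + mu$l - W$k$l))
      = (\<Sum>k\<in>UNIV. lam$k * (\<Sum>l\<in>UNIV. X$k$l)) + (\<Sum>l\<in>UNIV. mu$l * (\<Sum>k\<in>UNIV. X$k$l)) - W \<bullet> X"
    by (simp add: algebra_simps sum.distrib sum_subtractf sum_distrib_left inner_mat_eq
        sum.swap[of "\<lambda>k l. mu$l * X$k$l"])
  ultimately show ?thesis by (simp add: rows cols inner_diff_right)
qed

lemma sum_support_weighted_le:
  fixes X :: "real^'n^'n"
  assumes ds: "doubly_stochastic X" and p: "0 < p" "p < 1" and "\<epsilon> \<ge> 0" "c \<ge> 0"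
    and D: "\<And>k l. X$k$l > 0 \<Longrightarrow> D k l = c * (X$k$l + \<epsilon>) powr (p - 1)"
  shows "(\<Sum>k\<in>UNIV. \<Sum>l\<in>UNIV. X$k$l * D k l)
    \<le> c * (real (l0norm X) powr (1 - p) * (real CARD('n) + real (l0norm X) * \<epsilon>) powr p)"
proof -
  define T where "T = {(k, l). X$k$l \<noteq> 0}"
  define x where "x z = X$(fst z)$(snd z) + \<epsilon>" for z
  have nonneg: "\<And>k l. X$k$l \<ge> 0" using ds by (simp add: doubly_stochastic_def)
  have x_pos: "x z > 0" if "z \<in> T" for z
    using that nonneg[of "fst z" "snd z"] \<open>\<epsilon> \<ge> 0\<close> by (auto simp: x_def T_def order_le_less)
  have sum_T: "(\<Sum>z\<in>T. X$(fst z)$(snd z)) = real CARD('n)"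
  proof -
    have "(\<Sum>z\<in>T. X$(fst z)$(snd z)) = (\<Sum>z\<in>UNIV. X$(fst z)$(snd z))"
      unfolding T_def by (intro sum.mono_neutral_left) auto
    also have "\<dots> = real CARD('n)"
      using sum_doubly_stochastic[OF ds]
      by (simp add: sum.cartesian_product case_prod_unfold UNIV_Times_UNIV[symmetric]
          del: UNIV_Times_UNIV)
    finally show ?thesis .
  qed
  have "T \<noteq> {}" using sum_T by auto
  define g where "g z = (if z \<in> T then c * x z powr p else 0)" for z
  have "X$k$l * D k l \<le> g (k, l)" for k l
  proof (cases "X$k$l = 0")
    case False
    then have "X$k$l > 0" using nonneg[of k l] by linarith
    then have "X$k$l * D k l = X$k$l * (c * x (k, l) powr (p - 1))" using D by (simp add: x_def)
    also have "\<dots> \<le> x (k, l) * (c * x (k, l) powr (p - 1))"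
      using \<open>c \<ge> 0\<close> \<open>\<epsilon> \<ge> 0\<close> by (intro mult_right_mono) (auto simp: x_def)
    also have "\<dots> = c * x (k, l) powr p"
      using x_pos[of "(k, l)"] False by (simp add: T_def powr_diff)
    finally show ?thesis using False by (simp add: T_def g_def)
  qed (simp add: T_def g_def)
  then have "(\<Sum>k\<in>UNIV. \<Sum>l\<in>UNIV. X$k$l * D k l)
      \<le> (\<Sum>k\<in>UNIV. \<Sum>l\<in>UNIV. g (k, l))"
    by (intro sum_mono)
  also have "\<dots> = (\<Sum>z\<in>UNIV. g z)"
    by (simp add: sum.cartesian_product UNIV_Times_UNIV[symmetric] del: UNIV_Times_UNIV)
  also have "\<dots> = c * (\<Sum>z\<in>T. x z powr p)"
    by (simp add: g_def sum.If_cases sum_distrib_left)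
  also have "\<dots> \<le> c * (real (card T) powr (1 - p) * (\<Sum>z\<in>T. x z) powr p)"
    using \<open>T \<noteq> {}\<close> x_pos p \<open>c \<ge> 0\<close>
    by (intro mult_left_mono sum_powr_le_card_powr_sum) auto
  also have "(\<Sum>z\<in>T. x z) = real CARD('n) + real (card T) * \<epsilon>"
    using sum_T by (simp add: x_def sum.distrib)
  finally show ?thesis by (simp add: T_def l0norm_def)
qed

lemma sum_perm_diag_ge:
  fixes X :: "real^'n^'n"
  assumes ds: "doubly_stochastic X" and p: "p < 1" and "\<epsilon> \<ge> 0" "c \<ge> 0"
    and \<pi>: "\<pi> i = j" "\<And>k. X$k$(\<pi> k) > 0"
    and D: "\<And>k l. X$k$l > 0 \<Longrightarrow> D k l = c * (X$k$l + \<epsilon>) powr (p - 1)"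
  shows "D i j + (real CARD('n) - 1) * (c * (1 + \<epsilon>) powr (p - 1)) \<le> (\<Sum>k\<in>UNIV. D k (\<pi> k))"
proof -
  have "c * (1 + \<epsilon>) powr (p - 1) \<le> D k (\<pi> k)" for k
  proof -
    have "(1 + \<epsilon>) powr (p - 1) \<le> (X$k$(\<pi> k) + \<epsilon>) powr (p - 1)"
      using p \<pi>(2)[of k] doubly_stochastic_le_1[OF ds, of k "\<pi> k"] \<open>\<epsilon> \<ge> 0\<close>
      by (intro powr_mono2') auto
    then show ?thesis using D[OF \<pi>(2)] \<open>c \<ge> 0\<close> by (simp add: mult_left_mono)
  qed
  then have "(\<Sum>k\<in>UNIV - {i}. c * (1 + \<epsilon>) powr (p - 1)) \<le> (\<Sum>k\<in>UNIV - {i}. D k (\<pi> k))"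
    by (intro sum_mono)
  moreover have "(\<Sum>k\<in>UNIV. D k (\<pi> k)) = D i j + (\<Sum>k\<in>UNIV - {i}. D k (\<pi> k))"
    using \<pi>(1) sum.remove[of UNIV i "\<lambda>k. D k (\<pi> k)"] by simp
  ultimately show ?thesis
    by (simp add: card_Diff_singleton of_nat_diff Suc_leI)
qed

lemma inner_grad_diff_perm_matrix_le:
  fixes grad :: "real^'n^'n \<Rightarrow> real^'n^'n"
  assumes lip: "\<And>X Y. X \<in> unit_box_mat \<Longrightarrow> Y \<in> unit_box_mat \<Longrightarrow>
                  norm (grad X - grad Y) \<le> L * norm (X - Y)"
    and ds: "doubly_stochastic X"
  shows "grad X \<bullet> (X - perm_matrix \<pi>)
    \<le> sqrt (2 * real CARD('n)) * (L * sqrt (real CARD('n)) + norm (grad 0))"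
proof -
  have box: "X \<in> unit_box_mat" "0 \<in> unit_box_mat" "perm_matrix \<pi> \<in> unit_box_mat"
    by (simp_all add: doubly_stochastic_in_unit_box[OF ds] perm_matrix_in_unit_box)
      (simp add: unit_box_mat_def)
  have "norm (X - 0) \<le> sqrt (real CARD('n))"
    using norm_diff_unit_box_le[OF box(1,2)] by (simp add: sum_doubly_stochastic[OF ds])
  then have "norm (grad X - grad 0) \<le> L * sqrt (real CARD('n))"
    using lip[OF box(1,2)] lipschitz_on_unit_box_nonneg[OF lip]
    by (meson mult_left_mono order_trans)
  then have "norm (grad X) \<le> L * sqrt (real CARD('n)) + norm (grad 0)"
    using norm_triangle_sub[of "grad X" "grad 0"] by linarith
  moreover have "norm (X - perm_matrix \<pi>) \<le> sqrt (2 * real CARD('n))"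
    using norm_diff_unit_box_le[OF box(1,3)] by (simp add: sum_doubly_stochastic[OF ds] sum_perm_matrix)
  ultimately have "norm (grad X) * norm (X - perm_matrix \<pi>)
      \<le> (L * sqrt (real CARD('n)) + norm (grad 0)) * sqrt (2 * real CARD('n))"
    by (intro mult_mono) (auto intro: order_trans[OF norm_ge_zero])
  moreover have "grad X \<bullet> (X - perm_matrix \<pi>) \<le> norm (grad X) * norm (X - perm_matrix \<pi>)"
    by (rule norm_cauchy_schwarz)
  ultimately show ?thesis by (simp add: mult.commute)
qed

lemma doubly_stochastic_hall_condition:
  fixes X :: "real^'n^'n"
  assumes ds: "doubly_stochastic X" and pos: "X$i$j > 0" and A: "i \<notin> A"
  shows "card A \<le> card (\<Union>k\<in>A. {l. l \<noteq> j \<and> X$k$l > 0})"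
proof -
  define N where "N = {l. \<exists>k\<in>A. X$k$l > 0}"
  have rows: "\<And>k. (\<Sum>l\<in>UNIV. X$k$l) = 1" and cols: "\<And>l. (\<Sum>k\<in>UNIV. X$k$l) = 1"
    and nonneg: "\<And>k l. X$k$l \<ge> 0" using ds by (auto simp: doubly_stochastic_def)
  have "(\<Sum>l\<in>N. X$k$l) = 1" if "k \<in> A" for k
  proof -
    have "(\<Sum>l\<in>UNIV. X$k$l) = (\<Sum>l\<in>N. X$k$l)"
      using that nonneg[of k] by (intro sum.mono_neutral_right) (auto simp: N_def order_le_less)
    then show ?thesis using rows by simp
  qed
  then have "real (card A) + (\<Sum>l\<in>N. X$i$l) = (\<Sum>k\<in>insert i A. \<Sum>l\<in>N. X$k$l)"
    using A by simp
  also have "\<dots> = (\<Sum>l\<in>N. \<Sum>k\<in>insert i A. X$k$l)" by (rule sum.swap)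
  also have "\<dots> \<le> (\<Sum>l\<in>N. \<Sum>k\<in>UNIV. X$k$l)"
    using nonneg by (intro sum_mono sum_mono2) auto
  finally have rows_le_cols: "real (card A) + (\<Sum>l\<in>N. X$i$l) \<le> real (card N)"
    by (simp add: cols)
  have "(\<Union>k\<in>A. {l. l \<noteq> j \<and> X$k$l > 0}) = N - {j}" by (auto simp: N_def)
  moreover have "card A \<le> card (N - {j})"
  proof (cases "j \<in> N")
    case True
    have "X$i$j \<le> (\<Sum>l\<in>N. X$i$l)" using True nonneg by (intro member_le_sum) auto
    then have "card A < card N" using rows_le_cols pos by linarith
    then show ?thesis using True by simp
  next
    case False
    have "0 \<le> (\<Sum>l\<in>N. X$i$l)" using nonneg by (intro sum_nonneg) auto
    then show ?thesis using rows_le_cols False by simp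
  qed
  ultimately show ?thesis by simp
qed

lemma doubly_stochastic_perm_through_entry:
  fixes X :: "real^'n^'n"
  assumes ds: "doubly_stochastic X" and pos: "X$i$j > 0"
  shows "\<exists>\<pi>. bij \<pi> \<and> \<pi> i = j \<and> (\<forall>k. X$k$(\<pi> k) > 0)"
proof -
  obtain g where g: "inj_on g (- {i})" "\<forall>k\<in>- {i}. g k \<noteq> j \<and> X$k$(g k) > 0"
    using hall_marriage[of "- {i}" "\<lambda>k. {l. l \<noteq> j \<and> X$k$l > 0}"]
      doubly_stochastic_hall_condition[OF ds pos] by auto
  have "inj_on (g(i := j)) (insert i (- {i}))"
    using g by (auto simp: inj_on_def)
  moreover have "insert i (- {i}) = UNIV" by auto
  ultimately have "inj (g(i := j))" by simp
  then have "bij (g(i := j))" by (intro bijI finite_UNIV_inj_surj) simp_all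
  then show ?thesis using g pos by (intro exI[of _ "g(i := j)"]) auto
qed

theorem theorem3p4:
  fixes f :: "real^'n^'n \<Rightarrow> real"
    and grad :: "real^'n^'n \<Rightarrow> real^'n^'n"
    and L p \<epsilon> \<sigma> :: real
    and Xb :: "real^'n^'n"
  assumes deriv: "\<And>X. (f has_derivative (\<lambda>H. grad X \<bullet> H)) (at X)"
    and lip: "\<And>X Y. X \<in> unit_box_mat \<Longrightarrow> Y \<in> unit_box_mat \<Longrightarrow>
                norm (grad X - grad Y) \<le> L * norm (X - Y)"
    and p: "0 < p" "p < 1"
    and eps: "\<epsilon> \<ge> 0"
    and sigma: "\<sigma> > 0"
    and ds: "doubly_stochastic Xb"
    and kkt: "\<exists>(S::real^'n^'n) (lam::real^'n) (\<mu>::real^'n). \<forall>i j.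
               Xb$i$j * S$i$j = 0 \<and> S$i$j \<ge> 0 \<and>
               (grad Xb $i$j - lam$i - \<mu>$j) * (Xb$i$j + \<epsilon>) + \<sigma> * p * (Xb$i$j + \<epsilon>) powr p
                 = \<epsilon> * S$i$j"
  shows "\<forall>i j. Xb$i$j > 0 \<longrightarrow>
           Xb$i$j \<ge> max
             ((real (l0norm Xb) powr (1 - p) * (real CARD('n) + real (l0norm Xb) * \<epsilon>) powr p
               - (real CARD('n) - 1) * (1 + \<epsilon>) powr (p - 1)
               + sqrt (2 * real CARD('n)) * (L * sqrt (real CARD('n)) + norm (grad 0)) / (\<sigma> * p))
              powr (1 / (p - 1)) - \<epsilon>) 0"
proof (intro allI impI)
  fix i j assume pos: "Xb$i$j > 0"
  obtain S lam \<mu> where S: "\<And>k l. Xb$k$l * S$k$l = 0"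
    and stationary: "\<And>k l. (grad Xb $k$l - lam$k - \<mu>$l) * (Xb$k$l + \<epsilon>)
                        + \<sigma> * p * (Xb$k$l + \<epsilon>) powr p = \<epsilon> * S$k$l"
    using kkt by blast
  define D where "D k l = lam$k + \<mu>$l - grad Xb $k$l" for k l
  have sp: "\<sigma> * p > 0" using sigma p by simp
  have D_supp: "D k l = \<sigma> * p * (Xb$k$l + \<epsilon>) powr (p - 1)" if "Xb$k$l > 0" for k l
    unfolding D_def using kkt_multiplier_on_support[OF that eps S stationary] .
  obtain \<pi> where \<pi>: "bij \<pi>" "\<pi> i = j" "\<And>k. Xb$k$(\<pi> k) > 0"
    using doubly_stochastic_perm_through_entry[OF ds pos] by blast
  let ?n = "real CARD('n)"
  let ?A = "real (l0norm Xb) powr (1 - p) * (?n + real (l0norm Xb) * \<epsilon>) powr p"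
  let ?C = "sqrt (2 * ?n) * (L * sqrt ?n + norm (grad 0))"
  let ?c = "(1 + \<epsilon>) powr (p - 1)"
  define q where "q = (Xb$i$j + \<epsilon>) powr (p - 1)"
  have "\<sigma> * p * q + (?n - 1) * (\<sigma> * p * ?c) \<le> (\<Sum>k\<in>UNIV. D k (\<pi> k))"
    using sum_perm_diag_ge[OF ds p(2) eps _ \<pi>(2,3) D_supp] sp D_supp[OF pos]
    unfolding q_def by simp
  also have "\<dots> = (\<Sum>k\<in>UNIV. \<Sum>l\<in>UNIV. Xb$k$l * D k l) + grad Xb \<bullet> (Xb - perm_matrix \<pi>)"
    unfolding D_def by (rule sum_perm_matrix_diag_eq[OF ds \<pi>(1)])
  also have "\<dots> \<le> \<sigma> * p * ?A + ?C"
    using sum_support_weighted_le[OF ds p eps _ D_supp] inner_grad_diff_perm_matrix_le[OF lip ds] sp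
    by (intro add_mono) auto
  finally have "\<sigma> * p * (q - ?A + (?n - 1) * ?c) \<le> ?C" by (simp add: algebra_simps)
  then have "q - ?A + (?n - 1) * ?c \<le> ?C / (\<sigma> * p)"
    by (subst pos_le_divide_eq[OF sp]) (simp add: mult.commute)
  then have "q \<le> ?A - (?n - 1) * ?c + ?C / (\<sigma> * p)" by linarith
  then show "Xb$i$j \<ge> max ((?A - (?n - 1) * ?c + ?C / (\<sigma> * p)) powr (1 / (p - 1)) - \<epsilon>) 0"
    using powr_recip_le_of_powr_le[of "Xb$i$j + \<epsilon>" "p - 1"] pos eps p
    unfolding q_def by force
qed

end
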